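(* Let $N=2^n$, let $|\psi\rangle=\sum_{j=0}^{N-1}x_j|j\rangle$, and let $F=\{a_k\}_{k=-d}^{d}$ be a filter. Then the convolution $$|\psi*F\rangle=\sum_{m=0}^{N-1}(\psi*F)_m|m\rangle,\qquad (\psi*F)_m=\sum_{k=-d}^{d}a_k\,x_{[m-k \bmod N]},$$ can be implemented (up to normalization, as a block of a unitary circuit with one ancilla qubit applied to $|\psi\rangle$) using only $\mathcal{O}(d\log N+\log^2N)$ 1- and 2-qubit gates.
   Context: $|j\rangle$ denotes computational basis states on $n$ qubits. Gates are arbitrary 1- and 2-qubit unitaries. *)

theory Defs
  imports Complex_Main
begin

text \<open>States on q qubits are functions nat => complex, meaningful on indices < 2^q.
  Qubit i of basis index j is bit i of j (little endian).\<close>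

definition bit_of :: "nat \<Rightarrow> nat \<Rightarrow> nat" where
  "bit_of i j = (j div 2 ^ i) mod 2"

definition set_bit_to :: "nat \<Rightarrow> nat \<Rightarrow> nat \<Rightarrow> nat" where
  "set_bit_to i b j = j - bit_of i j * 2 ^ i + b * 2 ^ i"

definition unitary_mat :: "nat \<Rightarrow> (nat \<Rightarrow> nat \<Rightarrow> complex) \<Rightarrow> bool" where
  "unitary_mat k U \<longleftrightarrow> (\<forall>i<k. \<forall>j<k.
      (\<Sum>l<k. cnj (U l i) * U l j) = (if i = j then 1 else 0))"

text \<open>Gates: an arbitrary 1-qubit unitary on qubit t, or an arbitrary 2-qubit unitary on
  the ordered pair of qubits (t1, t2); basis index of the pair is 2*bit t1 + bit t2.\<close>
datatype gate =
    Gate1 "nat \<Rightarrow> nat \<Rightarrow> complex" nat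
  | Gate2 "nat \<Rightarrow> nat \<Rightarrow> complex" nat nat

fun gate_valid :: "nat \<Rightarrow> gate \<Rightarrow> bool" where
  "gate_valid q (Gate1 U t) \<longleftrightarrow> t < q \<and> unitary_mat 2 U"
| "gate_valid q (Gate2 U t1 t2) \<longleftrightarrow> t1 < q \<and> t2 < q \<and> t1 \<noteq> t2 \<and> unitary_mat 4 U"

fun apply_gate :: "gate \<Rightarrow> (nat \<Rightarrow> complex) \<Rightarrow> (nat \<Rightarrow> complex)" where
  "apply_gate (Gate1 U t) v = (\<lambda>j. \<Sum>b<2. U (bit_of t j) b * v (set_bit_to t b j))"
| "apply_gate (Gate2 U t1 t2) v = (\<lambda>j. \<Sum>b1<2. \<Sum>b2<2.
      U (2 * bit_of t1 j + bit_of t2 j) (2 * b1 + b2) *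
      v (set_bit_to t2 b2 (set_bit_to t1 b1 j)))"

definition circuit_valid :: "nat \<Rightarrow> gate list \<Rightarrow> bool" where
  "circuit_valid q C \<longleftrightarrow> (\<forall>g\<in>set C. gate_valid q g)"

definition run_circuit :: "gate list \<Rightarrow> (nat \<Rightarrow> complex) \<Rightarrow> (nat \<Rightarrow> complex)" where
  "run_circuit C v = fold apply_gate C v"

definition conv :: "nat \<Rightarrow> nat \<Rightarrow> (int \<Rightarrow> complex) \<Rightarrow> (nat \<Rightarrow> complex) \<Rightarrow> nat \<Rightarrow> complex" where
  "conv N d a x m = (\<Sum>k\<in>{-int d..int d}. a k * x (nat ((int m - k) mod int N)))"

end

(* Convolution with the filter is diagonal in the Fourier basis: Fourier mode y is multiplied
   by f(w^y) = sum_k a_k w^(k y), where w = exp(2 pi i / 2^n).  The circuit applies the quantum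
   Fourier transform (O(n^2) gates), realises s z^d f(z) at z = w^y as the top-left entry of a
   quantum signal processing product A_2d S(z) ... A_1 S(z) A_0 of one-qubit unitaries on an
   ancilla interleaved with S(z) = diag(1, z), where each S(z) costs n controlled phase gates,
   divides out z^d with n phase gates, and undoes the Fourier transform: O(d n + n^2) gates.
   A signal processing sequence exists for every polynomial P of degree 2d with |P| < 1 on the
   unit circle: the Fejer-Riesz theorem yields Q with |P|^2 + |Q|^2 = 1 there, and a layer of
   the pair (P, Q) can be peeled off at a time.  The scaling s = 1 / (1 + sum_k |a_k|) makes
   |P| < 1. *)

theory Submission
  imports Defs "HOL-Computational_Algebra.Fundamental_Theorem_Algebra"
begin

section \<open>Basis indices\<close>

lemma bit_of_less_2: "bit_of i j < 2"
  by (simp add: bit_of_def)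

lemma bit_of_cases: "bit_of i j = 0 \<or> bit_of i j = 1"
  using bit_of_less_2[of i j] by linarith

lemma bit_of_eq_of_bool: "bit_of i j = of_bool (bit j i)"
  by (simp add: bit_of_def bit_iff_odd odd_iff_mod_2_eq_one)

lemma unset_bit_add_bit_of: "unset_bit i j + bit_of i j * 2 ^ i = j"
proof (cases "bit j i")
  case True
  then have "set_bit i (unset_bit i j) = j"
    by (auto intro: bit_eqI simp: bit_simps)
  then show ?thesis
    using True by (simp add: set_bit_eq bit_simps bit_of_eq_of_bool)
next
  case False
  then show ?thesis
    by (auto intro!: bit_eqI simp: bit_simps bit_of_eq_of_bool)
qed

lemma set_bit_to_eq: "set_bit_to i b j = unset_bit i j + b * 2 ^ i"
  using unset_bit_add_bit_of[of i j] unfolding set_bit_to_def by linarith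

lemma bit_set_bit_to:
  assumes "b < 2"
  shows "bit (set_bit_to i b j) k \<longleftrightarrow> (if k = i then b = 1 else bit j k)"
proof -
  have "b = 0 \<or> b = 1"
    using assms by linarith
  moreover have "unset_bit i j + 2 ^ i = set_bit i (unset_bit i j)"
    by (simp add: set_bit_eq bit_simps)
  ultimately show ?thesis
    unfolding set_bit_to_eq by (auto simp: bit_simps)
qed

lemma bit_of_set_bit_to_same [simp]: "b < 2 \<Longrightarrow> bit_of i (set_bit_to i b j) = b"
  by (cases b) (auto simp: bit_of_eq_of_bool bit_set_bit_to)

lemma bit_of_set_bit_to_other: "b < 2 \<Longrightarrow> k \<noteq> i \<Longrightarrow> bit_of k (set_bit_to i b j) = bit_of k j"
  by (simp add: bit_of_eq_of_bool bit_set_bit_to)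

lemma set_bit_to_id [simp]: "bit_of i j = b \<Longrightarrow> set_bit_to i b j = j"
  using unset_bit_add_bit_of[of i j] by (simp add: set_bit_to_eq)

lemma set_bit_to_set_bit_to_same [simp]:
  "b < 2 \<Longrightarrow> c < 2 \<Longrightarrow> set_bit_to i c (set_bit_to i b j) = set_bit_to i c j"
  by (rule bit_eqI) (simp add: bit_set_bit_to)

lemma set_bit_to_commute:
  "b < 2 \<Longrightarrow> c < 2 \<Longrightarrow> k \<noteq> i \<Longrightarrow>
    set_bit_to k c (set_bit_to i b j) = set_bit_to i b (set_bit_to k c j)"
  by (rule bit_eqI) (simp add: bit_set_bit_to)

lemma mod_2_pow_Suc: "j mod 2 ^ Suc i = j mod 2 ^ i + 2 ^ i * bit_of i j"
  using mod_mult2_eq[of j "2 ^ i" 2] by (simp add: bit_of_def mult.commute)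

lemma mod_2_pow_eq_sum: "j mod 2 ^ l = (\<Sum>m<l. bit_of m j * 2 ^ m)"
  by (induction l) (simp_all add: mod_2_pow_Suc [simplified] mult.commute)

lemma set_bit_to_mod_2_pow: "b < 2 \<Longrightarrow> set_bit_to i b j mod 2 ^ i = j mod 2 ^ i"
  by (rule bit_eqI) (auto simp: bit_set_bit_to simp flip: take_bit_eq_mod simp add: bit_take_bit_iff)

lemma set_bit_to_div_2_pow: "b < 2 \<Longrightarrow> i < n \<Longrightarrow> set_bit_to i b j div 2 ^ n = j div 2 ^ n"
  by (rule bit_eqI) (auto simp: bit_set_bit_to simp flip: drop_bit_eq_div simp add: bit_drop_bit_eq)

lemma bit_of_add_2_pow_mult: "r < 2 ^ n \<Longrightarrow> a < 2 \<Longrightarrow> bit_of n (r + 2 ^ n * a) = a"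
  by (simp add: bit_of_def)

lemma set_bit_to_add_2_pow_mult:
  assumes "r < 2 ^ n" "a < 2" "b < 2"
  shows "set_bit_to n b (r + 2 ^ n * a) = r + 2 ^ n * b"
  using assms by (cases a; cases b) (auto simp: set_bit_to_def bit_of_def)

section \<open>Circuits and their adjoints\<close>

lemma sum_less_2: "(\<Sum>b<2. f b) = f 0 + f (1::nat)"
  by (simp add: eval_nat_numeral)

lemma sum_less_4: "(\<Sum>l<4. f l) = (\<Sum>b1<2. \<Sum>b2<2. f (2 * b1 + b2 :: nat))"
  by (simp add: eval_nat_numeral add.assoc)

lemma run_circuit_Nil [simp]: "run_circuit [] v = v"
  by (simp add: run_circuit_def)

lemma run_circuit_Cons: "run_circuit (g # C) v = run_circuit C (apply_gate g v)"
  by (simp add: run_circuit_def)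

lemma run_circuit_append: "run_circuit (C1 @ C2) v = run_circuit C2 (run_circuit C1 v)"
  by (simp add: run_circuit_def)

lemma circuit_valid_append [simp]:
  "circuit_valid q (C1 @ C2) \<longleftrightarrow> circuit_valid q C1 \<and> circuit_valid q C2"
  by (auto simp: circuit_valid_def)

lemma circuit_valid_Cons [simp]: "circuit_valid q (g # C) \<longleftrightarrow> gate_valid q g \<and> circuit_valid q C"
  by (simp add: circuit_valid_def)

lemma run_circuit_map_upt_diagonal:
  assumes "\<And>i v j. i < k \<Longrightarrow> apply_gate (G i) v j = f i j * v j"
  shows "run_circuit (map G [0..<k]) v j = (\<Prod>i<k. f i j) * v j"
  using assms by (induction k) (simp_all add: run_circuit_append run_circuit_Cons mult_ac)

fun gate_adjoint :: "gate \<Rightarrow> gate" where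
  "gate_adjoint (Gate1 U t) = Gate1 (\<lambda>i j. cnj (U j i)) t"
| "gate_adjoint (Gate2 U t1 t2) = Gate2 (\<lambda>i j. cnj (U j i)) t1 t2"

definition circuit_adjoint :: "gate list \<Rightarrow> gate list" where
  "circuit_adjoint C = rev (map gate_adjoint C)"

lemma apply_gate_adjoint_Gate1:
  assumes U: "unitary_mat 2 U"
  shows "apply_gate (gate_adjoint (Gate1 U t)) (apply_gate (Gate1 U t) v) = v"
proof
  fix j
  let ?a = "bit_of t j"
  have "apply_gate (gate_adjoint (Gate1 U t)) (apply_gate (Gate1 U t) v) j
      = (\<Sum>c<2. (\<Sum>b<2. cnj (U b ?a) * U b c) * v (set_bit_to t c j))"
    by (simp add: sum_less_2 algebra_simps)
  also have "\<dots> = (\<Sum>c<2. of_bool (c = ?a) * v (set_bit_to t c j))"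
    using U bit_of_less_2[of t j] unfolding unitary_mat_def by (intro sum.cong) auto
  also have "\<dots> = v j"
    using bit_of_cases[of t j] by (auto simp: sum_less_2)
  finally show "apply_gate (gate_adjoint (Gate1 U t)) (apply_gate (Gate1 U t) v) j = v j" .
qed

lemma apply_gate_adjoint_Gate2:
  assumes U: "unitary_mat 4 U" and "t1 \<noteq> t2"
  shows "apply_gate (gate_adjoint (Gate2 U t1 t2)) (apply_gate (Gate2 U t1 t2) v) = v"
proof
  fix j
  let ?a = "2 * bit_of t1 j + bit_of t2 j"
  let ?J = "\<lambda>c1 c2. set_bit_to t2 c2 (set_bit_to t1 c1 j)"
  have bits: "bit_of t1 (?J b1 b2) = b1" "bit_of t2 (?J b1 b2) = b2" if "b1 < 2" "b2 < 2" for b1 b2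
    using that \<open>t1 \<noteq> t2\<close> by (simp_all add: bit_of_set_bit_to_other)
  have reset: "set_bit_to t2 c2 (set_bit_to t1 c1 (?J b1 b2)) = ?J c1 c2"
    if "b1 < 2" "b2 < 2" "c1 < 2" "c2 < 2" for b1 b2 c1 c2
    using that \<open>t1 \<noteq> t2\<close> by (simp add: set_bit_to_commute[of _ _ t1 t2])
  have "apply_gate (gate_adjoint (Gate2 U t1 t2)) (apply_gate (Gate2 U t1 t2) v) j
      = (\<Sum>b1<2. \<Sum>b2<2. cnj (U (2 * b1 + b2) ?a) *
          (\<Sum>c1<2. \<Sum>c2<2. U (2 * b1 + b2) (2 * c1 + c2) * v (?J c1 c2)))"
    by (simp only: apply_gate.simps gate_adjoint.simps) (intro sum.cong refl; simp add: bits reset)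
  also have "\<dots> = (\<Sum>c1<2. \<Sum>c2<2. (\<Sum>l<4. cnj (U l ?a) * U l (2 * c1 + c2)) * v (?J c1 c2))"
    unfolding sum_less_4 by (simp add: sum_less_2 algebra_simps)
  also have "\<dots> = (\<Sum>c1<2. \<Sum>c2<2. of_bool (2 * c1 + c2 = ?a) * v (?J c1 c2))"
    using U bit_of_less_2[of t1 j] bit_of_less_2[of t2 j] unfolding unitary_mat_def
    by (intro sum.cong refl) auto
  also have "\<dots> = v (?J (bit_of t1 j) (bit_of t2 j))"
    using bit_of_cases[of t1 j] bit_of_cases[of t2 j] by (auto simp: sum_less_2)
  also have "\<dots> = v j"
    by simp
  finally show "apply_gate (gate_adjoint (Gate2 U t1 t2)) (apply_gate (Gate2 U t1 t2) v) j = v j" .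
qed

lemma apply_gate_adjoint: "gate_valid q g \<Longrightarrow> apply_gate (gate_adjoint g) (apply_gate g v) = v"
  by (cases g) (auto simp del: apply_gate.simps gate_adjoint.simps
      intro: apply_gate_adjoint_Gate1 apply_gate_adjoint_Gate2)

lemma run_circuit_adjoint:
  "circuit_valid q C \<Longrightarrow> run_circuit (circuit_adjoint C) (run_circuit C v) = v"
proof (induction C arbitrary: v)
  case (Cons g C)
  then show ?case
    by (auto simp: circuit_adjoint_def run_circuit_append run_circuit_Cons apply_gate_adjoint
        simp del: apply_gate.simps gate_adjoint.simps)
qed (simp add: circuit_adjoint_def)

definition hadamard :: "nat \<Rightarrow> nat \<Rightarrow> complex" where
  "hadamard a b = complex_of_real ((if a = 1 \<and> b = 1 then -1 else 1) / sqrt 2)"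

definition phase_mat :: "complex \<Rightarrow> nat \<Rightarrow> nat \<Rightarrow> complex" where
  "phase_mat \<phi> a b = (if a = b then (if a = 1 then \<phi> else 1) else 0)"

definition cphase_mat :: "complex \<Rightarrow> nat \<Rightarrow> nat \<Rightarrow> complex" where
  "cphase_mat \<phi> a b = (if a = b then (if a = 3 then \<phi> else 1) else 0)"

lemma apply_gate_phase:
  "apply_gate (Gate1 (phase_mat \<phi>) t) v j = (if bit_of t j = 1 then \<phi> else 1) * v j"
  using bit_of_cases[of t j] by (auto simp: sum_less_2 phase_mat_def)

lemma apply_gate_cphase:
  "apply_gate (Gate2 (cphase_mat \<phi>) t1 t2) v j =
    (if bit_of t1 j = 1 \<and> bit_of t2 j = 1 then \<phi> else 1) * v j"
  using bit_of_cases[of t1 j] bit_of_cases[of t2 j] by (auto simp: sum_less_2 cphase_mat_def)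

lemma unitary_mat_hadamard: "unitary_mat 2 hadamard"
proof -
  have "complex_of_real (1 / sqrt 2) * complex_of_real (1 / sqrt 2) = 1 / 2"
    by (simp flip: of_real_mult)
  then show ?thesis
    by (auto simp: unitary_mat_def less_2_cases_iff sum_less_2 hadamard_def)
qed

lemma unitary_mat_diagonal:
  assumes "\<And>l i. U l i = (if l = i then u i else 0)" and "\<And>i. i < k \<Longrightarrow> cmod (u i) = 1"
  shows "unitary_mat k U"
  unfolding unitary_mat_def
proof (intro allI impI)
  fix i j assume "i < k" "j < k"
  have "cnj (u i) * u i = 1"
    using assms(2)[OF \<open>i < k\<close>] by (simp add: mult.commute flip: complex_norm_square)
  then show "(\<Sum>l<k. cnj (U l i) * U l j) = (if i = j then 1 else 0)"
    using \<open>i < k\<close> by (auto simp: assms(1) if_distrib[of "\<lambda>x. _ * x"] cong: if_cong)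
qed

lemma unitary_mat_phase: "cmod \<phi> = 1 \<Longrightarrow> unitary_mat 2 (phase_mat \<phi>)"
  by (rule unitary_mat_diagonal[where u = "\<lambda>i. if i = 1 then \<phi> else 1"]) (auto simp: phase_mat_def)

lemma unitary_mat_cphase: "cmod \<phi> = 1 \<Longrightarrow> unitary_mat 4 (cphase_mat \<phi>)"
  by (rule unitary_mat_diagonal[where u = "\<lambda>i. if i = 3 then \<phi> else 1"]) (auto simp: cphase_mat_def)

lemma gate_adjoint_hadamard: "gate_adjoint (Gate1 hadamard t) = Gate1 hadamard t"
  by (simp add: hadamard_def fun_eq_iff)

lemma gate_adjoint_cphase: "gate_adjoint (Gate2 (cphase_mat \<phi>) t1 t2) = Gate2 (cphase_mat (cnj \<phi>)) t1 t2"
  by (simp add: cphase_mat_def fun_eq_iff)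

section \<open>Roots of unity and the discrete Fourier transform\<close>

definition unit_root :: "nat \<Rightarrow> int \<Rightarrow> complex" where
  "unit_root M x = cis (2 * pi * of_int x / of_nat M)"

lemma unit_root_add: "unit_root M (x + y) = unit_root M x * unit_root M y"
  by (simp add: unit_root_def cis_mult add_divide_distrib distrib_left)

lemma unit_root_0 [simp]: "unit_root M 0 = 1"
  by (simp add: unit_root_def)

lemma norm_unit_root [simp]: "cmod (unit_root M x) = 1"
  by (simp add: unit_root_def)

lemma unit_root_power: "unit_root M x ^ k = unit_root M (x * int k)"
  by (induction k) (simp_all add: unit_root_add distrib_left mult.commute)

lemma unit_root_eq_1_iff:
  assumes "M > 0"
  shows "unit_root M x = 1 \<longleftrightarrow> int M dvd x"
proof
  assume "unit_root M x = 1"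
  then have "cos (2 * pi * of_int x / of_nat M) = 1"
    unfolding unit_root_def by (metis cis.sel(1) one_complex.sel(1))
  then obtain k :: int where "2 * pi * of_int x / of_nat M = of_int k * 2 * pi"
    by (auto simp: cos_one_2pi_int)
  then have "of_int x = (of_int (k * int M) :: real)"
    using assms by (simp add: field_simps)
  then show "int M dvd x"
    by (simp only: of_int_eq_iff) simp
next
  assume "int M dvd x"
  then obtain k where "x = int M * k" ..
  then have "2 * pi * of_int x / of_nat M = 2 * pi * of_int k"
    using assms by simp
  then show "unit_root M x = 1"
    by (simp add: unit_root_def cis_multiple_2pi)
qed

lemma unit_root_mult_period: "M > 0 \<Longrightarrow> unit_root M (x + int M * k) = unit_root M x"
  by (simp add: unit_root_add unit_root_eq_1_iff)

lemma sum_unit_root: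
  assumes "M > 0"
  shows "(\<Sum>y<M. unit_root M (e * int y)) = (if int M dvd e then of_nat M else 0)"
proof -
  have powers: "(\<Sum>y<M. unit_root M (e * int y)) = (\<Sum>y<M. unit_root M e ^ y)"
    by (simp add: unit_root_power)
  show ?thesis
  proof (cases "int M dvd e")
    case True
    then show ?thesis
      unfolding powers using assms by (simp add: unit_root_eq_1_iff [THEN iffD2])
  next
    case False
    moreover have "unit_root M e ^ M = 1"
      using assms by (simp add: unit_root_power unit_root_eq_1_iff)
    ultimately show ?thesis
      unfolding powers using assms by (simp add: unit_root_eq_1_iff geometric_sum)
  qed
qed

lemma int_dvd_diff_iff_eq: "a < M \<Longrightarrow> b < M \<Longrightarrow> int M dvd int a - int b \<longleftrightarrow> a = b"
  by (simp flip: mod_eq_dvd_iff)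

lemma sum_unit_root_inversion:
  assumes "M > 0" "y < M"
  shows "(\<Sum>t<M. unit_root M (int t * int y) * (\<Sum>s<M. unit_root M (- int t * int s) * f s)) = of_nat M * f y"
proof -
  have "(\<Sum>t<M. unit_root M (int t * int y) * (\<Sum>s<M. unit_root M (- int t * int s) * f s))
      = (\<Sum>t<M. \<Sum>s<M. unit_root M ((int y - int s) * int t) * f s)"
    by (simp add: sum_distrib_left unit_root_add [symmetric] algebra_simps flip: mult.assoc)
  also have "\<dots> = (\<Sum>s<M. (\<Sum>t<M. unit_root M ((int y - int s) * int t)) * f s)"
    by (subst sum.swap) (simp add: sum_distrib_right)
  also have "\<dots> = (\<Sum>s<M. if s = y then of_nat M * f s else 0)"
    using assms by (intro sum.cong) (auto simp: sum_unit_root int_dvd_diff_iff_eq)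
  finally show ?thesis
    using assms by simp
qed

lemma sum_select_mod:
  assumes "M > 0"
  shows "(\<Sum>t<M. if int M dvd k + int t - int m then x t else 0) = x (nat ((int m - k) mod int M))"
proof -
  have select: "int M dvd k + int t - int m \<longleftrightarrow> t = nat ((int m - k) mod int M)" if "t < M" for t
  proof -
    have "int M dvd k + int t - int m \<longleftrightarrow> int t mod int M = (int m - k) mod int M"
      by (simp add: mod_eq_dvd_iff algebra_simps)
    also have "\<dots> \<longleftrightarrow> t = nat ((int m - k) mod int M)"
      using that assms by auto
    finally show ?thesis .
  qed
  have "(\<Sum>t<M. if int M dvd k + int t - int m then x t else 0)
      = (\<Sum>t<M. if t = nat ((int m - k) mod int M) then x t else 0)"
    by (intro sum.cong) (simp_all add: select)
  moreover have "nat ((int m - k) mod int M) < M"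
    using assms by (simp add: nat_less_iff)
  ultimately show ?thesis
    by simp
qed

lemma sum_unit_root_convolution:
  assumes "M > 0"
  shows "(\<Sum>y<M. unit_root M (- int m * int y) * (\<Sum>k\<in>K. a k * unit_root M (k * int y)) *
      (\<Sum>t<M. unit_root M (int t * int y) * x t))
    = of_nat M * (\<Sum>k\<in>K. a k * x (nat ((int m - k) mod int M)))"
proof -
  have "(\<Sum>y<M. unit_root M (- int m * int y) * (\<Sum>k\<in>K. a k * unit_root M (k * int y)) *
      (\<Sum>t<M. unit_root M (int t * int y) * x t))
    = (\<Sum>y<M. \<Sum>k\<in>K. \<Sum>t<M. a k * x t * unit_root M ((k + int t - int m) * int y))"
    by (simp add: sum_distrib_left sum_distrib_right unit_root_add [symmetric] algebra_simps)
  also have "\<dots> = (\<Sum>k\<in>K. \<Sum>y<M. \<Sum>t<M. a k * x t * unit_root M ((k + int t - int m) * int y))"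
    by (rule sum.swap)
  also have "\<dots> = (\<Sum>k\<in>K. \<Sum>t<M. \<Sum>y<M. a k * x t * unit_root M ((k + int t - int m) * int y))"
    by (rule sum.cong[OF refl]) (rule sum.swap)
  also have "\<dots> = (\<Sum>k\<in>K. \<Sum>t<M. a k * x t * (\<Sum>y<M. unit_root M ((k + int t - int m) * int y)))"
    by (simp add: sum_distrib_left)
  also have "\<dots> = of_nat M * (\<Sum>k\<in>K. a k * (\<Sum>t<M. if int M dvd k + int t - int m then x t else 0))"
    unfolding sum_unit_root[OF assms] sum_distrib_left by (intro sum.cong refl) simp
  finally show ?thesis
    using assms by (simp add: sum_select_mod)
qed

section \<open>The quantum Fourier transform\<close>

definition rev_bits_from :: "nat \<Rightarrow> nat \<Rightarrow> nat \<Rightarrow> nat" where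
  "rev_bits_from n l j = (\<Sum>i\<in>{l..<n}. bit_of i j * 2 ^ (n - 1 - i))"

abbreviation rev_bits :: "nat \<Rightarrow> nat \<Rightarrow> nat" where
  "rev_bits n j \<equiv> rev_bits_from n 0 j"

lemma rev_bits_from_step:
  "l < n \<Longrightarrow> rev_bits_from n l j = bit_of l j * 2 ^ (n - 1 - l) + rev_bits_from n (Suc l) j"
  by (simp add: rev_bits_from_def sum.atLeast_Suc_lessThan)

lemma rev_bits_from_set_bit_to:
  "b < 2 \<Longrightarrow> i < l \<Longrightarrow> rev_bits_from n l (set_bit_to i b j) = rev_bits_from n l j"
  unfolding rev_bits_from_def by (intro sum.cong refl) (simp add: bit_of_set_bit_to_other)

lemma rev_bits_eq_horner_sum:
  "rev_bits n j = horner_sum of_bool 2 (map (\<lambda>i. bit j (n - 1 - i)) [0..<n])"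
proof -
  have "rev_bits n j = (\<Sum>i=0..<n. bit_of (n - 1 - i) j * 2 ^ (n - 1 - (n - 1 - i)))"
    unfolding rev_bits_from_def by (subst sum.atLeastLessThan_rev) simp
  also have "\<dots> = (\<Sum>i=0..<n. of_bool (bit j (n - 1 - i)) * 2 ^ i)"
    by (intro sum.cong) (auto simp: bit_of_eq_of_bool)
  finally show ?thesis
    by (simp add: horner_sum_eq_sum)
qed

lemma bit_rev_bits: "bit (rev_bits n j) k \<longleftrightarrow> k < n \<and> bit j (n - 1 - k)"
  by (auto simp: rev_bits_eq_horner_sum bit_horner_sum_bit_iff)

lemma rev_bits_less: "rev_bits n j < 2 ^ n"
  using horner_sum_of_bool_2_less[of "map (\<lambda>i. bit j (n - 1 - i)) [0..<n]"]
  by (simp add: rev_bits_eq_horner_sum)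

lemma rev_bits_rev_bits: "rev_bits n (rev_bits n j) = j mod 2 ^ n"
  by (rule bit_eqI) (auto simp: bit_rev_bits bit_take_bit_iff simp flip: take_bit_eq_mod)

lemma rev_bits_mod: "rev_bits n (j mod 2 ^ n) = rev_bits n j"
  by (rule bit_eqI) (auto simp: bit_rev_bits bit_take_bit_iff simp flip: take_bit_eq_mod)

lemma sum_rev_bits: "(\<Sum>s<2 ^ n. f (rev_bits n s)) = (\<Sum>y<2 ^ n. f y)"
  by (rule sum.reindex_bij_witness[where i = "rev_bits n" and j = "rev_bits n"])
     (auto simp: rev_bits_rev_bits rev_bits_less)

lemma prod_unit_root_bits:
  "(\<Prod>i<k. if bit_of i j = 1 then unit_root M (e i) else 1) =
    unit_root M (\<Sum>i<k. int (bit_of i j) * e i)"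
proof (induction k)
  case (Suc k)
  then show ?case
    using bit_of_cases[of k j] by (auto simp: unit_root_add)
qed simp

lemma prod_unit_root_rev_bits:
  "(\<Prod>i<n. if bit_of i j = 1 then unit_root M (c * 2 ^ (n - 1 - i)) else 1) =
    unit_root M (c * int (rev_bits n j))"
  unfolding prod_unit_root_bits[where e = "\<lambda>i. c * 2 ^ (n - 1 - i)"]
  by (simp add: rev_bits_from_def atLeast0LessThan sum_distrib_left mult_ac)

(* The textbook circuit without the final swaps, so its output is in bit-reversed order. *)
definition qft_stage :: "nat \<Rightarrow> nat \<Rightarrow> gate list" where
  "qft_stage n l = Gate1 hadamard l #
     map (\<lambda>m. Gate2 (cphase_mat (unit_root (2 ^ n) (2 ^ (n - 1 - l + m)))) l m) [0..<l]"

primrec qft_stages :: "nat \<Rightarrow> nat \<Rightarrow> gate list" where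
  "qft_stages n 0 = []"
| "qft_stages n (Suc k) = qft_stages n k @ qft_stage n (n - Suc k)"

definition qft :: "nat \<Rightarrow> gate list" where
  "qft n = qft_stages n n"

definition iqft :: "nat \<Rightarrow> gate list" where
  "iqft n = circuit_adjoint (qft n)"

definition qft_scale :: "nat \<Rightarrow> complex" where
  "qft_scale n = complex_of_real ((1 / sqrt 2) ^ n)"

lemma qft_scale_square: "qft_scale n * qft_scale n * 2 ^ n = 1"
proof -
  have "qft_scale n * qft_scale n = complex_of_real ((1 / 2) ^ n)"
    by (simp add: qft_scale_def flip: of_real_mult power_mult_distrib)
  then show ?thesis
    by (simp add: power_one_over)
qed

lemma hadamard_eq_unit_root:
  assumes "n \<ge> 1" "a < 2" "b < 2"
  shows "hadamard a b = complex_of_real (1 / sqrt 2) * unit_root (2 ^ n) (2 ^ (n - 1) * int a * int b)"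
proof -
  have "2 * pi * 2 ^ (n - 1) / 2 ^ n = pi"
    using \<open>n \<ge> 1\<close> by (simp add: power_diff)
  then have "unit_root (2 ^ n) (2 ^ (n - 1)) = -1"
    by (simp add: unit_root_def)
  then show ?thesis
    using assms by (auto simp: hadamard_def less_2_cases_iff)
qed

lemma run_qft_stage:
  assumes "l < n"
  shows "run_circuit (qft_stage n l) v j = complex_of_real (1 / sqrt 2) *
    (\<Sum>b<2. unit_root (2 ^ n) (int (bit_of l j) * (2 ^ (n - 1) * int b + 2 ^ (n - 1 - l) * int (j mod 2 ^ l)))
      * v (set_bit_to l b j))"
proof -
  let ?y = "int (bit_of l j)"
  have phases: "run_circuit
        (map (\<lambda>m. Gate2 (cphase_mat (unit_root (2 ^ n) (2 ^ (n - 1 - l + m)))) l m) [0..<l]) w j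
      = unit_root (2 ^ n) (?y * 2 ^ (n - 1 - l) * int (j mod 2 ^ l)) * w j" for w
  proof -
    have "run_circuit
          (map (\<lambda>m. Gate2 (cphase_mat (unit_root (2 ^ n) (2 ^ (n - 1 - l + m)))) l m) [0..<l]) w j
        = (\<Prod>m<l. if bit_of l j = 1 \<and> bit_of m j = 1
            then unit_root (2 ^ n) (2 ^ (n - 1 - l + m)) else 1) * w j"
      by (rule run_circuit_map_upt_diagonal) (rule apply_gate_cphase)
    also have "(\<Prod>m<l. if bit_of l j = 1 \<and> bit_of m j = 1
          then unit_root (2 ^ n) (2 ^ (n - 1 - l + m)) else 1)
        = (\<Prod>m<l. if bit_of m j = 1 then unit_root (2 ^ n) (?y * 2 ^ (n - 1 - l + m)) else 1)"
      using bit_of_cases[of l j] by (intro prod.cong) auto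
    also have "\<dots> = unit_root (2 ^ n) (?y * 2 ^ (n - 1 - l) * int (j mod 2 ^ l))"
      unfolding prod_unit_root_bits[where e = "\<lambda>m. ?y * 2 ^ (n - 1 - l + m)"]
      by (simp add: mod_2_pow_eq_sum of_nat_sum sum_distrib_left power_add mult_ac)
    finally show ?thesis .
  qed
  have "n \<ge> 1"
    using assms by simp
  then show ?thesis
    unfolding qft_stage_def run_circuit_Cons phases
    by (simp add: sum_distrib_left hadamard_eq_unit_root
        bit_of_less_2 unit_root_add distrib_left mult_ac)
qed

lemma sum_less_double: "(\<Sum>t<2 * K. F t) = (\<Sum>b<2. \<Sum>t<K. F (b + 2 * t :: nat))"
  by (induction K) (simp_all add: sum_less_2 sum.distrib add.assoc)

lemma unit_root_qft_phase:
  assumes "i < n"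
  shows "unit_root (2 ^ n) (y * (2 ^ (n - 1) * b + 2 ^ (n - 1 - i) * x) + (x + 2 ^ i * b + 2 ^ Suc i * t) * R)
    = unit_root (2 ^ n) ((x + 2 ^ i * (b + 2 * t)) * (y * 2 ^ (n - 1 - i) + R))"
proof -
  have "(2::int) ^ i * 2 ^ (n - 1 - i) = 2 ^ (n - 1)" "2 * (2::int) ^ (n - 1) = 2 ^ n"
    using assms by (simp_all flip: power_add power_Suc)
  then have "(x + 2 ^ i * (b + 2 * t)) * (y * 2 ^ (n - 1 - i) + R)
      = y * (2 ^ (n - 1) * b + 2 ^ (n - 1 - i) * x) + (x + 2 ^ i * b + 2 ^ Suc i * t) * R
        + int (2 ^ n) * (t * y)"
    by (simp add: algebra_simps)
  then show ?thesis
    using unit_root_mult_period[of "2 ^ n" _ "t * y"] by simp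
qed

lemma run_qft_stages:
  "k \<le> n \<Longrightarrow> run_circuit (qft_stages n k) v j = complex_of_real ((1 / sqrt 2) ^ k) *
    (\<Sum>t<2 ^ k. unit_root (2 ^ n) (int ((j mod 2 ^ (n - k) + 2 ^ (n - k) * t) * rev_bits_from n (n - k) j))
      * v (j mod 2 ^ (n - k) + 2 ^ (n - k) * t + 2 ^ n * (j div 2 ^ n)))"
proof (induction k arbitrary: j)
  case (Suc k)
  define i where "i = n - Suc k"
  have i: "i < n" "n - k = Suc i"
    using Suc.prems by (auto simp: i_def)
  define x where "x = j mod 2 ^ i"
  define y where "y = bit_of i j"
  define R where "R = rev_bits_from n (Suc i) j"
  define h where "h = j div 2 ^ n"
  define c where "c = complex_of_real (1 / sqrt 2)"
  have prev: "run_circuit (qft_stages n k) v (set_bit_to i b j) = c ^ k *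
      (\<Sum>t<2 ^ k. unit_root (2 ^ n) (int ((x + 2 ^ i * b + 2 ^ Suc i * t) * R))
        * v (x + 2 ^ i * b + 2 ^ Suc i * t + 2 ^ n * h))" if "b < 2" for b
    using Suc.IH[of "set_bit_to i b j"] Suc.prems that i
    by (simp add: c_def x_def R_def h_def mod_2_pow_Suc set_bit_to_mod_2_pow set_bit_to_div_2_pow
        rev_bits_from_set_bit_to del: power_Suc)
  have "run_circuit (qft_stages n (Suc k)) v j
      = run_circuit (qft_stage n i) (run_circuit (qft_stages n k) v) j"
    by (simp add: run_circuit_append i_def)
  also have "\<dots> = c * (\<Sum>b<2. unit_root (2 ^ n) (int y * (2 ^ (n - 1) * int b + 2 ^ (n - 1 - i) * int x))
      * run_circuit (qft_stages n k) v (set_bit_to i b j))"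
    unfolding run_qft_stage[OF i(1)] c_def x_def y_def ..
  also have "\<dots> = c * c ^ k *
      (\<Sum>b<2. \<Sum>t<2 ^ k. unit_root (2 ^ n)
        (int y * (2 ^ (n - 1) * int b + 2 ^ (n - 1 - i) * int x) + int ((x + 2 ^ i * b + 2 ^ Suc i * t) * R))
        * v (x + 2 ^ i * b + 2 ^ Suc i * t + 2 ^ n * h))"
    by (simp add: prev sum_distrib_left unit_root_add mult_ac del: power_Suc)
  also have "\<dots> = c * c ^ k * (\<Sum>b<2. \<Sum>t<2 ^ k. unit_root (2 ^ n)
        (int ((x + 2 ^ i * (b + 2 * t)) * (y * 2 ^ (n - 1 - i) + R)))
        * v (x + 2 ^ i * (b + 2 * t) + 2 ^ n * h))"
    using unit_root_qft_phase[OF i(1), of "int y" "int b" "int x" "int t" "int R" for b t]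
    by (simp add: algebra_simps)
  also have "\<dots> = c * c ^ k * (\<Sum>t<2 ^ Suc k. unit_root (2 ^ n)
        (int ((x + 2 ^ i * t) * (y * 2 ^ (n - 1 - i) + R))) * v (x + 2 ^ i * t + 2 ^ n * h))"
    by (simp only: power_Suc sum_less_double)
  finally show ?case
    unfolding i_def[symmetric] i(2) rev_bits_from_step[OF i(1)]
    by (simp add: c_def x_def y_def R_def h_def mult.commute)
qed (simp add: rev_bits_from_def)

lemma run_qft: "run_circuit (qft n) v j = qft_scale n *
    (\<Sum>t<2 ^ n. unit_root (2 ^ n) (int (t * rev_bits n j)) * v (t + 2 ^ n * (j div 2 ^ n)))"
  using run_qft_stages[of n n v j] by (simp add: qft_def qft_scale_def)

lemma length_qft: "length (qft n) \<le> n * n"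
proof -
  have "length (qft_stages n k) \<le> k * n" if "k \<le> n" for k
    using that by (induction k) (auto simp: qft_stage_def)
  then show ?thesis
    by (simp add: qft_def)
qed

lemma circuit_valid_qft_stages:
  "k \<le> n \<Longrightarrow> n \<le> q \<Longrightarrow>
    circuit_valid q (qft_stages n k) \<and> circuit_valid q (circuit_adjoint (qft_stages n k))"
  by (induction k) (auto simp: qft_stage_def circuit_adjoint_def circuit_valid_def unitary_mat_hadamard
      unitary_mat_cphase gate_adjoint_hadamard gate_adjoint_cphase simp del: gate_adjoint.simps)

lemma circuit_valid_qft: "n \<le> q \<Longrightarrow> circuit_valid q (qft n)"
  and circuit_valid_iqft: "n \<le> q \<Longrightarrow> circuit_valid q (iqft n)"
  using circuit_valid_qft_stages[of n n q] by (simp_all add: qft_def iqft_def)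

lemma length_iqft: "length (iqft n) \<le> n * n"
  using length_qft by (simp add: iqft_def circuit_adjoint_def)

definition qft_inverse_map :: "nat \<Rightarrow> (nat \<Rightarrow> complex) \<Rightarrow> nat \<Rightarrow> complex" where
  "qft_inverse_map n u j = qft_scale n *
    (\<Sum>s<2 ^ n. unit_root (2 ^ n) (- int ((j mod 2 ^ n) * rev_bits n s)) * u (s + 2 ^ n * (j div 2 ^ n)))"

lemma run_qft_qft_inverse_map: "run_circuit (qft n) (qft_inverse_map n u) j = u j"
proof -
  define h where "h = j div 2 ^ n"
  have "(\<Sum>s<2 ^ n. unit_root (2 ^ n) (- int (t * rev_bits n s)) * u (s + 2 ^ n * h))
      = (\<Sum>s<2 ^ n. unit_root (2 ^ n) (- int t * int (rev_bits n s))
          * u (rev_bits n (rev_bits n s) + 2 ^ n * h))" for t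
    by (intro sum.cong) (simp_all add: rev_bits_rev_bits)
  then have reindex: "(\<Sum>s<2 ^ n. unit_root (2 ^ n) (- int (t * rev_bits n s)) * u (s + 2 ^ n * h))
      = (\<Sum>s<2 ^ n. unit_root (2 ^ n) (- int t * int s) * u (rev_bits n s + 2 ^ n * h))" for t
    by (simp only: sum_rev_bits[where
          f = "\<lambda>s. unit_root (2 ^ n) (- int t * int s) * u (rev_bits n s + 2 ^ n * h)"])
  have shift: "qft_inverse_map n u (t + 2 ^ n * h) = qft_scale n *
      (\<Sum>s<2 ^ n. unit_root (2 ^ n) (- int t * int s) * u (rev_bits n s + 2 ^ n * h))" if "t < 2 ^ n" for t
    using that unfolding qft_inverse_map_def reindex[symmetric] by simp
  have "run_circuit (qft n) (qft_inverse_map n u) j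
      = qft_scale n *
        (\<Sum>t<2 ^ n. unit_root (2 ^ n) (int (t * rev_bits n j)) * qft_inverse_map n u (t + 2 ^ n * h))"
    by (simp add: run_qft h_def)
  also have "\<dots> = qft_scale n * (\<Sum>t<2 ^ n. unit_root (2 ^ n) (int (t * rev_bits n j)) * (qft_scale n *
      (\<Sum>s<2 ^ n. unit_root (2 ^ n) (- int t * int s) * u (rev_bits n s + 2 ^ n * h))))"
    by (intro arg_cong2[where f = "(*)"] refl sum.cong) (simp_all add: shift)
  also have "\<dots> = qft_scale n * qft_scale n * (\<Sum>t<2 ^ n. unit_root (2 ^ n) (int t * int (rev_bits n j)) *
      (\<Sum>s<2 ^ n. unit_root (2 ^ n) (- int t * int s) * u (rev_bits n s + 2 ^ n * h)))"
    by (simp add: sum_distrib_left mult_ac)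
  also have "\<dots> = qft_scale n * qft_scale n * 2 ^ n * u (rev_bits n (rev_bits n j) + 2 ^ n * h)"
    by (subst sum_unit_root_inversion) (simp_all add: rev_bits_less)
  also have "\<dots> = u j"
    by (simp add: qft_scale_square rev_bits_rev_bits h_def)
  finally show ?thesis .
qed

lemma run_iqft: "run_circuit (iqft n) u = qft_inverse_map n u"
proof -
  have "run_circuit (qft n) (qft_inverse_map n u) = u"
    by (rule ext) (rule run_qft_qft_inverse_map)
  then show ?thesis
    using run_circuit_adjoint[OF circuit_valid_qft[of n n, OF order_refl]] by (metis iqft_def)
qed

section \<open>Quantum signal processing on the ancilla\<close>

definition mat2_mult :: "(nat \<Rightarrow> nat \<Rightarrow> complex) \<Rightarrow> (nat \<Rightarrow> nat \<Rightarrow> complex) \<Rightarrow> nat \<Rightarrow> nat \<Rightarrow> complex" where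
  "mat2_mult A B i j = (\<Sum>l<2. A i l * B l j)"

definition ancilla_action :: "nat \<Rightarrow> gate list \<Rightarrow> (nat \<Rightarrow> nat \<Rightarrow> nat \<Rightarrow> complex) \<Rightarrow> bool" where
  "ancilla_action n C W \<longleftrightarrow> (\<forall>v r a. r < 2 ^ n \<longrightarrow> a < 2 \<longrightarrow>
     run_circuit C v (r + 2 ^ n * a) = (\<Sum>b<2. W r a b * v (r + 2 ^ n * b)))"

lemma ancilla_actionD:
  "ancilla_action n C W \<Longrightarrow> r < 2 ^ n \<Longrightarrow> a < 2 \<Longrightarrow>
    run_circuit C v (r + 2 ^ n * a) = (\<Sum>b<2. W r a b * v (r + 2 ^ n * b))"
  by (simp add: ancilla_action_def)

lemma ancilla_action_cong:
  "ancilla_action n C W \<Longrightarrow> (\<And>r a b. r < 2 ^ n \<Longrightarrow> a < 2 \<Longrightarrow> b < 2 \<Longrightarrow> W r a b = W' r a b) \<Longrightarrow>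
    ancilla_action n C W'"
  by (simp add: ancilla_action_def)

lemma ancilla_action_append:
  assumes "ancilla_action n C1 W1" "ancilla_action n C2 W2"
  shows "ancilla_action n (C1 @ C2) (\<lambda>r. mat2_mult (W2 r) (W1 r))"
  unfolding ancilla_action_def
proof (intro allI impI)
  fix v and r a :: nat assume "r < 2 ^ n" "a < 2"
  have "run_circuit (C1 @ C2) v (r + 2 ^ n * a) = (\<Sum>b<2. W2 r a b * run_circuit C1 v (r + 2 ^ n * b))"
    using ancilla_actionD[OF assms(2) \<open>r < 2 ^ n\<close> \<open>a < 2\<close>] by (simp only: run_circuit_append)
  also have "\<dots> = (\<Sum>b<2. W2 r a b * (\<Sum>c<2. W1 r b c * v (r + 2 ^ n * c)))"
    by (simp add: ancilla_actionD[OF assms(1) \<open>r < 2 ^ n\<close>] cong: sum.cong_simp)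
  also have "\<dots> = (\<Sum>c<2. mat2_mult (W2 r) (W1 r) a c * v (r + 2 ^ n * c))"
    by (simp add: mat2_mult_def sum_less_2 algebra_simps)
  finally show "run_circuit (C1 @ C2) v (r + 2 ^ n * a)
      = (\<Sum>c<2. mat2_mult (W2 r) (W1 r) a c * v (r + 2 ^ n * c))" .
qed

lemma ancilla_action_Gate1: "ancilla_action n [Gate1 A n] (\<lambda>r. A)"
  by (simp add: ancilla_action_def run_circuit_Cons bit_of_add_2_pow_mult set_bit_to_add_2_pow_mult)

lemma ancilla_action_diagonal:
  "(\<And>v j. run_circuit C v j = f j * v j) \<Longrightarrow>
    ancilla_action n C (\<lambda>r a b. if a = b then f (r + 2 ^ n * a) else 0)"
  by (auto simp: ancilla_action_def less_2_cases_iff sum_less_2)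

definition controlled_phases :: "nat \<Rightarrow> gate list" where
  "controlled_phases n = map (\<lambda>i. Gate2 (cphase_mat (unit_root (2 ^ n) (2 ^ (n - 1 - i)))) i n) [0..<n]"

lemma ancilla_action_controlled_phases:
  "ancilla_action n (controlled_phases n) (\<lambda>r. phase_mat (unit_root (2 ^ n) (int (rev_bits n r))))"
proof (rule ancilla_action_cong[OF ancilla_action_diagonal])
  fix v j
  have "run_circuit (controlled_phases n) v j =
      (\<Prod>i<n. if bit_of i j = 1 \<and> bit_of n j = 1 then unit_root (2 ^ n) (2 ^ (n - 1 - i)) else 1) * v j"
    unfolding controlled_phases_def by (rule run_circuit_map_upt_diagonal) (rule apply_gate_cphase)
  also have "(\<Prod>i<n. if bit_of i j = 1 \<and> bit_of n j = 1 then unit_root (2 ^ n) (2 ^ (n - 1 - i)) else 1)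
      = (if bit_of n j = 1 then unit_root (2 ^ n) (int (rev_bits n j)) else 1)"
    using prod_unit_root_rev_bits[where n = n and j = j and M = "2 ^ n" and c = 1] by (simp cong: if_cong)
  finally show "run_circuit (controlled_phases n) v j =
      (if bit_of n j = 1 then unit_root (2 ^ n) (int (rev_bits n j)) else 1) * v j" .
next
  fix r a b :: nat assume "r < 2 ^ n" "a < 2"
  then show "(if a = b then (if bit_of n (r + 2 ^ n * a) = 1
        then unit_root (2 ^ n) (int (rev_bits n (r + 2 ^ n * a))) else 1) else 0)
      = phase_mat (unit_root (2 ^ n) (int (rev_bits n r))) a b"
    using rev_bits_mod[of n "r + 2 ^ n * a"] by (simp add: bit_of_add_2_pow_mult phase_mat_def)
qed

lemma circuit_valid_controlled_phases: "circuit_valid (n + 1) (controlled_phases n)"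
  by (auto simp: controlled_phases_def circuit_valid_def unitary_mat_cphase)

primrec qsp_mat ::
  "(nat \<Rightarrow> nat \<Rightarrow> complex) \<Rightarrow> (nat \<Rightarrow> nat \<Rightarrow> complex) list \<Rightarrow> complex \<Rightarrow> nat \<Rightarrow> nat \<Rightarrow> complex" where
  "qsp_mat A0 [] z = A0"
| "qsp_mat A0 (A # As) z = mat2_mult A (mat2_mult (phase_mat z) (qsp_mat A0 As z))"

primrec qsp_circuit :: "nat \<Rightarrow> (nat \<Rightarrow> nat \<Rightarrow> complex) \<Rightarrow> (nat \<Rightarrow> nat \<Rightarrow> complex) list \<Rightarrow> gate list" where
  "qsp_circuit n A0 [] = [Gate1 A0 n]"
| "qsp_circuit n A0 (A # As) = qsp_circuit n A0 As @ controlled_phases n @ [Gate1 A n]"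

lemma ancilla_action_qsp_circuit:
  "ancilla_action n (qsp_circuit n A0 As) (\<lambda>r. qsp_mat A0 As (unit_root (2 ^ n) (int (rev_bits n r))))"
proof (induction As)
  case Nil
  then show ?case
    by (simp add: ancilla_action_Gate1)
next
  case (Cons A As)
  then show ?case
    using ancilla_action_append[OF ancilla_action_append[OF Cons ancilla_action_controlled_phases]
        ancilla_action_Gate1]
    by simp
qed

lemma length_qsp_circuit: "length (qsp_circuit n A0 As) = 1 + length As * (n + 1)"
  by (induction As) (simp_all add: controlled_phases_def)

lemma circuit_valid_qsp_circuit:
  "unitary_mat 2 A0 \<Longrightarrow> \<forall>A\<in>set As. unitary_mat 2 A \<Longrightarrow> circuit_valid (n + 1) (qsp_circuit n A0 As)"
  using circuit_valid_controlled_phases[of n] by (induction As) (auto simp: circuit_valid_def)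

section \<open>Polynomials on the unit circle\<close>

lemma mult_cnj_if_norm_1: "cmod z = 1 \<Longrightarrow> z * cnj z = 1"
  by (simp flip: complex_norm_square)

lemma inverse_cnj_if_norm_1: "cmod z = 1 \<Longrightarrow> 1 / cnj z = z"
  using mult_cnj_if_norm_1[of z] by (metis divide_eq_eq mult_zero_right zero_neq_one)

lemma infinite_unit_circle: "infinite {z :: complex. cmod z = 1}"
proof
  assume fin: "finite {z :: complex. cmod z = 1}"
  define f where "f t = Complex t (sqrt (1 - t\<^sup>2))" for t
  have "f ` {-1<..<1} \<subseteq> {z. cmod z = 1}"
    by (auto simp: f_def cmod_def abs_square_less_1 less_imp_le)
  moreover have "inj_on f {-1<..<1}"
    by (rule inj_onI) (simp add: f_def)
  ultimately have "finite {-1<..<1 :: real}"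
    using fin finite_subset finite_imageD by metis
  then show False
    using infinite_Ioo[of "-1" "1 :: real"] by simp
qed

lemma poly_eq_if_eq_on_unit_circle:
  assumes "\<And>z. cmod z = 1 \<Longrightarrow> poly p z = poly q z"
  shows "p = (q :: complex poly)"
proof (rule ccontr)
  assume "p \<noteq> q"
  then have "finite {z. poly (p - q) z = 0}"
    by (intro poly_roots_finite) simp
  moreover have "{z. cmod z = 1} \<subseteq> {z. poly (p - q) z = 0}"
    using assms by auto
  ultimately have "finite {z :: complex. cmod z = 1}"
    by (rule finite_subset[rotated])
  then show False
    using infinite_unit_circle by contradiction
qed

lemma poly_eq_sum_le:
  fixes p :: "'a :: comm_semiring_1 poly"
  assumes "degree p \<le> D"
  shows "poly p x = (\<Sum>i\<le>D. coeff p i * x ^ i)"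
proof -
  have "poly p x = poly (\<Sum>i\<le>D. monom (coeff p i) i) x"
    by (simp only: poly_as_sum_of_monoms'[OF assms])
  then show ?thesis
    by (simp add: poly_sum poly_monom)
qed

definition poly_reflect :: "nat \<Rightarrow> complex poly \<Rightarrow> complex poly" where
  "poly_reflect D p = (\<Sum>k\<le>D. monom (cnj (coeff p (D - k))) k)"

lemma coeff_poly_reflect: "coeff (poly_reflect D p) i = (if i \<le> D then cnj (coeff p (D - i)) else 0)"
  by (simp add: poly_reflect_def coeff_sum coeff_monom)

lemma degree_poly_reflect: "degree (poly_reflect D p) \<le> D"
  by (rule degree_le) (simp add: coeff_poly_reflect)

lemma poly_reflect:
  assumes "degree p \<le> D" "x \<noteq> 0"
  shows "poly (poly_reflect D p) x = x ^ D * cnj (poly p (1 / cnj x))"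
proof -
  have "poly (poly_reflect D p) x = (\<Sum>i\<le>D. cnj (coeff p i) * x ^ (D - i))"
    unfolding poly_reflect_def poly_sum poly_monom
    by (subst (2) atLeast0AtMost [symmetric], subst sum.atLeastAtMost_rev) (simp add: atLeast0AtMost)
  also have "\<dots> = (\<Sum>i\<le>D. x ^ D * (cnj (coeff p i) * (1 / x) ^ i))"
    using \<open>x \<noteq> 0\<close> by (intro sum.cong refl) (simp add: power_diff power_one_over field_simps)
  also have "\<dots> = x ^ D * cnj (poly p (1 / cnj x))"
    using \<open>degree p \<le> D\<close> by (simp add: poly_eq_sum_le sum_distrib_left)
  finally show ?thesis .
qed

lemma poly_reflect_unit_circle:
  assumes "degree p \<le> D" "cmod z = 1"
  shows "poly (poly_reflect D p) z = z ^ D * cnj (poly p z)"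
proof -
  have "z \<noteq> 0"
    using assms(2) by auto
  then show ?thesis
    using poly_reflect[OF assms(1)] inverse_cnj_if_norm_1[OF assms(2)] by simp
qed

(* h stands for the Laurent polynomial z^-D h(z), required to be real and positive on the circle. *)
definition positive_on_circle :: "nat \<Rightarrow> complex poly \<Rightarrow> bool" where
  "positive_on_circle D h \<longleftrightarrow> (\<forall>z. cmod z = 1 \<longrightarrow> (\<exists>r::real. r > 0 \<and> poly h z = of_real r * z ^ D))"

lemma poly_reflect_eq_self:
  assumes "degree h \<le> 2 * D" "positive_on_circle D h"
  shows "poly_reflect (2 * D) h = h"
proof (rule poly_eq_if_eq_on_unit_circle)
  fix z :: complex assume z: "cmod z = 1"
  then obtain r :: real where r: "poly h z = of_real r * z ^ D"
    using assms(2) by (auto simp: positive_on_circle_def)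
  have "z ^ (2 * D) = z ^ D * z ^ D"
    by (simp add: mult_2 power_add)
  then have "poly (poly_reflect (2 * D) h) z = of_real r * z ^ D * (z * cnj z) ^ D"
    using poly_reflect_unit_circle[OF assms(1) z] by (simp add: r power_mult_distrib mult_ac)
  then show "poly (poly_reflect (2 * D) h) z = poly h z"
    by (simp add: r mult_cnj_if_norm_1[OF z])
qed

lemma poly_reflected_root:
  assumes "poly_reflect D h = h" "degree h \<le> D" "poly h \<rho> = 0" "\<rho> \<noteq> 0"
  shows "poly h (1 / cnj \<rho>) = 0"
proof -
  have "poly h (1 / cnj \<rho>) = poly (poly_reflect D h) (1 / cnj \<rho>)"
    using assms(1) by simp
  also have "\<dots> = (1 / cnj \<rho>) ^ D * cnj (poly h \<rho>)"
    using poly_reflect[OF assms(2)] assms(4) by simp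
  finally show ?thesis
    using assms(3) by simp
qed

lemma unit_circle_reflected_factor:
  assumes "cmod z = 1" "\<rho> \<noteq> 0"
  shows "(z - \<rho>) * (z - 1 / cnj \<rho>) = - of_real ((cmod (z - \<rho>))\<^sup>2) * z / cnj \<rho>"
proof -
  have "- of_real ((cmod (z - \<rho>))\<^sup>2) * z / cnj \<rho> = - ((z - \<rho>) * (cnj z - cnj \<rho>)) * z / cnj \<rho>"
    by (simp only: complex_norm_square complex_cnj_diff)
  also have "\<dots> = (z - \<rho>) * (z * cnj \<rho> - z * cnj z) / cnj \<rho>"
    by (simp add: algebra_simps)
  also have "\<dots> = (z - \<rho>) * (z - 1 / cnj \<rho>)"
    using assms by (simp add: mult_cnj_if_norm_1 field_simps)
  finally show ?thesis ..
qed

lemma positive_on_circle_cancel_factor: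
  assumes "positive_on_circle (Suc D) h" "cmod \<rho> \<noteq> 1"
    and h: "\<And>z. cmod z = 1 \<Longrightarrow> poly h z = of_real ((cmod (z - \<rho>))\<^sup>2) * z * poly g z"
  shows "positive_on_circle D g"
  unfolding positive_on_circle_def
proof (intro allI impI)
  fix z :: complex assume z: "cmod z = 1"
  obtain r :: real where r: "r > 0" "poly h z = of_real r * z ^ Suc D"
    using assms(1) z by (auto simp: positive_on_circle_def)
  have "z \<noteq> \<rho>"
    using z assms(2) by auto
  then have d: "(cmod (z - \<rho>))\<^sup>2 > 0"
    by simp
  have "z \<noteq> 0"
    using z by auto
  then have "poly g z = of_real (r / (cmod (z - \<rho>))\<^sup>2) * z ^ D"
    using h[OF z] r(2) d by (simp add: field_simps)
  moreover have "r / (cmod (z - \<rho>))\<^sup>2 > 0"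
    using r(1) d by simp
  ultimately show "\<exists>r. r > 0 \<and> poly g z = of_real r * z ^ D"
    by blast
qed

lemma poly_factor_two_roots:
  fixes h :: "complex poly"
  assumes "poly h \<rho> = 0" "poly h \<sigma> = 0" "\<sigma> \<noteq> \<rho>"
  obtains g where "h = [:-\<rho>, 1:] * [:-\<sigma>, 1:] * g"
proof -
  obtain g1 where g1: "h = [:-\<rho>, 1:] * g1"
    using assms(1) by (auto simp: poly_eq_0_iff_dvd elim: dvdE)
  then have "poly g1 \<sigma> = 0"
    using assms(2,3) by simp
  then obtain g where "g1 = [:-\<sigma>, 1:] * g"
    by (auto simp: poly_eq_0_iff_dvd elim: dvdE)
  then show ?thesis
    by (intro that[of g]) (simp only: g1 mult.assoc)
qed

lemma inverse_cnj_neq_if_norm_neq_1: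
  assumes "\<rho> \<noteq> 0" "cmod \<rho> \<noteq> 1"
  shows "1 / cnj \<rho> \<noteq> \<rho>"
proof
  assume "1 / cnj \<rho> = \<rho>"
  then have "\<rho> * cnj \<rho> = 1"
    using assms(1) by (simp add: field_simps)
  then have "of_real ((cmod \<rho>)\<^sup>2) = (1 :: complex)"
    by (simp only: complex_norm_square)
  then have "(cmod \<rho>)\<^sup>2 = 1"
    by (simp only: of_real_eq_1_iff)
  then show False
    using assms(2) norm_ge_zero[of \<rho>] by (simp add: power2_eq_1_iff)
qed

lemma fejer_riesz_step_zero:
  assumes deg: "degree h \<le> 2 * Suc D" and "poly_reflect (2 * Suc D) h = h" "coeff h 0 = 0"
  shows "\<exists>g. degree g \<le> 2 * D \<and> (\<forall>z. poly h z = z * poly g z)"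
proof -
  have top: "coeff h (2 * Suc D) = 0"
    using assms(2,3) coeff_poly_reflect[of "2 * Suc D" h "2 * Suc D"] by simp
  obtain g where h: "h = pCons 0 g"
    using assms(3) by (cases h) simp
  have "degree g \<le> Suc (2 * D)"
    using deg by (simp add: h degree_pCons_eq_if split: if_splits)
  have "degree g \<le> 2 * D"
  proof (rule degree_le, intro allI impI)
    fix i assume "2 * D < i"
    then consider "i = Suc (2 * D)" | "Suc (2 * D) < i"
      by linarith
    then show "coeff g i = 0"
      using top \<open>degree g \<le> Suc (2 * D)\<close> by cases (auto simp: h coeff_eq_0)
  qed
  then show ?thesis
    by (auto simp: h)
qed

lemma fejer_riesz_step_root:
  assumes deg: "degree h \<le> 2 * Suc D" and reflect: "poly_reflect (2 * Suc D) h = h"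
    and pos: "positive_on_circle (Suc D) h" and "coeff h 0 \<noteq> 0"
  shows "\<exists>\<rho> g. cmod \<rho> \<noteq> 1 \<and> degree g \<le> 2 * D \<and>
    (\<forall>z. cmod z = 1 \<longrightarrow> poly h z = of_real ((cmod (z - \<rho>))\<^sup>2) * z * poly g z)"
proof -
  have "coeff h (2 * Suc D) \<noteq> 0"
    using assms(2,4) coeff_poly_reflect[of "2 * Suc D" h "2 * Suc D"] by simp
  then have "degree h \<noteq> 0"
    using le_degree by fastforce
  then have "\<not> constant (poly h)"
    by (simp add: constant_degree)
  then obtain \<rho> where root: "poly h \<rho> = 0"
    using fundamental_theorem_of_algebra by blast
  have "\<rho> \<noteq> 0"
    using root assms(4) by (auto simp: poly_0_coeff_0)
  have "cmod \<rho> \<noteq> 1"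
    using root pos by (force simp: positive_on_circle_def)
  obtain g where h: "h = [:-\<rho>, 1:] * [:-(1 / cnj \<rho>), 1:] * g"
    using inverse_cnj_neq_if_norm_neq_1[OF \<open>\<rho> \<noteq> 0\<close> \<open>cmod \<rho> \<noteq> 1\<close>]
    by (rule poly_factor_two_roots[OF root poly_reflected_root[OF reflect deg root \<open>\<rho> \<noteq> 0\<close>]])
  have "g \<noteq> 0"
    using \<open>degree h \<noteq> 0\<close> h by auto
  then have "degree h = 2 + degree g"
    unfolding h by (simp add: degree_mult_eq del: mult_pCons_left)
  then have "degree (smult (- 1 / cnj \<rho>) g) \<le> 2 * D"
    using deg by simp
  moreover have "poly h z = of_real ((cmod (z - \<rho>))\<^sup>2) * z * poly (smult (- 1 / cnj \<rho>) g) z"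
    if "cmod z = 1" for z
  proof -
    have "poly h z = (z - \<rho>) * (z - 1 / cnj \<rho>) * poly g z"
      unfolding h poly_mult by simp
    then show ?thesis
      by (simp add: unit_circle_reflected_factor[OF that \<open>\<rho> \<noteq> 0\<close>])
  qed
  ultimately show ?thesis
    using \<open>cmod \<rho> \<noteq> 1\<close> by blast
qed

lemma fejer_riesz_step:
  assumes "degree h \<le> 2 * Suc D" "positive_on_circle (Suc D) h"
  shows "\<exists>\<rho> g. cmod \<rho> \<noteq> 1 \<and> degree g \<le> 2 * D \<and>
    (\<forall>z. cmod z = 1 \<longrightarrow> poly h z = of_real ((cmod (z - \<rho>))\<^sup>2) * z * poly g z)"
proof (cases "coeff h 0 = 0")
  case True
  then obtain g where "degree g \<le> 2 * D" "\<And>z. poly h z = z * poly g z"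
    using fejer_riesz_step_zero[OF assms(1) poly_reflect_eq_self[OF assms]] by blast
  then show ?thesis
    by (intro exI[of _ 0] exI[of _ g]) simp
next
  case False
  then show ?thesis
    using fejer_riesz_step_root[OF assms(1) poly_reflect_eq_self[OF assms] assms(2)] by blast
qed

theorem fejer_riesz:
  assumes "degree h \<le> 2 * D" "positive_on_circle D h"
  shows "\<exists>q. degree q \<le> D \<and> (\<forall>z. cmod z = 1 \<longrightarrow> poly h z = of_real ((cmod (poly q z))\<^sup>2) * z ^ D)"
  using assms
proof (induction D arbitrary: h)
  case 0
  then obtain c where h: "h = [:c:]"
    by (auto elim: degree_eq_zeroE)
  obtain r :: real where "r > 0" "poly h 1 = of_real r"
    using "0.prems"(2) by (force simp: positive_on_circle_def)
  then have "poly h z = of_real ((cmod (poly [:of_real (sqrt r):] z))\<^sup>2) * z ^ 0" for z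
    by (simp add: h)
  then show ?case
    by (intro exI[of _ "[:of_real (sqrt r):]"]) simp
next
  case (Suc D)
  obtain \<rho> g where "cmod \<rho> \<noteq> 1" "degree g \<le> 2 * D"
    and h: "\<And>z. cmod z = 1 \<Longrightarrow> poly h z = of_real ((cmod (z - \<rho>))\<^sup>2) * z * poly g z"
    using fejer_riesz_step[OF Suc.prems] by blast
  moreover have "positive_on_circle D g"
    by (rule positive_on_circle_cancel_factor[OF Suc.prems(2) \<open>cmod \<rho> \<noteq> 1\<close> h])
  ultimately obtain q where q: "degree q \<le> D"
      "\<And>z. cmod z = 1 \<Longrightarrow> poly g z = of_real ((cmod (poly q z))\<^sup>2) * z ^ D"
    using Suc.IH by blast
  have "degree ([:-\<rho>, 1:] * q) \<le> Suc D"
    using q(1) degree_mult_le[of "[:-\<rho>, 1:]" q] by simp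
  moreover have "poly h z = of_real ((cmod (poly ([:-\<rho>, 1:] * q) z))\<^sup>2) * z ^ Suc D" if "cmod z = 1" for z
  proof -
    have "poly ([:-\<rho>, 1:] * q) z = (z - \<rho>) * poly q z"
      by (simp add: algebra_simps)
    then show ?thesis
      using h[OF that] q(2)[OF that] by (simp add: norm_mult power_mult_distrib)
  qed
  ultimately show ?case
    by blast
qed

lemma complementary_poly:
  assumes "degree P \<le> D" and small: "\<And>z. cmod z = 1 \<Longrightarrow> cmod (poly P z) < 1"
  shows "\<exists>Q. degree Q \<le> D \<and> (\<forall>z. cmod z = 1 \<longrightarrow> (cmod (poly P z))\<^sup>2 + (cmod (poly Q z))\<^sup>2 = 1)"
proof -
  define h where "h = monom 1 D - P * poly_reflect D P"
  have h: "poly h z = of_real (1 - (cmod (poly P z))\<^sup>2) * z ^ D" if "cmod z = 1" for z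
    using poly_reflect_unit_circle[OF assms(1) that]
    by (simp add: h_def poly_monom algebra_simps flip: complex_norm_square)
  have "degree (P * poly_reflect D P) \<le> 2 * D"
    using degree_mult_le[of P "poly_reflect D P"] assms(1) degree_poly_reflect[of D P] by simp
  then have "degree h \<le> 2 * D"
    unfolding h_def by (intro degree_diff_le) (simp_all add: degree_monom_eq)
  moreover have "positive_on_circle D h"
    unfolding positive_on_circle_def
  proof (intro allI impI)
    fix z :: complex assume "cmod z = 1"
    have "(cmod (poly P z))\<^sup>2 < 1"
      using small[OF \<open>cmod z = 1\<close>] by (simp add: power_less_one_iff)
    then show "\<exists>r>0. poly h z = of_real r * z ^ D"
      using h[OF \<open>cmod z = 1\<close>] by (intro exI[of _ "1 - (cmod (poly P z))\<^sup>2"]) simp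
  qed
  ultimately obtain Q where "degree Q \<le> D"
      and Q: "\<And>z. cmod z = 1 \<Longrightarrow> poly h z = of_real ((cmod (poly Q z))\<^sup>2) * z ^ D"
    using fejer_riesz by blast
  moreover have "(cmod (poly P z))\<^sup>2 + (cmod (poly Q z))\<^sup>2 = 1" if "cmod z = 1" for z
  proof -
    have "z ^ D \<noteq> 0"
      using that by auto
    moreover have "of_real (1 - (cmod (poly P z))\<^sup>2) * z ^ D = of_real ((cmod (poly Q z))\<^sup>2) * z ^ D"
      using h[OF that] Q[OF that] by (rule trans[OF sym])
    ultimately have "complex_of_real (1 - (cmod (poly P z))\<^sup>2) = of_real ((cmod (poly Q z))\<^sup>2)"
      by (rule mult_right_cancel[THEN iffD1])
    then show ?thesis
      by (simp only: of_real_eq_iff)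
  qed
  ultimately show ?thesis
    by blast
qed

section \<open>Synthesis of signal processing sequences\<close>

lemma mult_cnj_add_mult_cnj: "a * cnj a + b * cnj b = of_real ((cmod a)\<^sup>2 + (cmod b)\<^sup>2)"
  by (simp only: of_real_add complex_norm_square)

definition su2_mat :: "complex \<Rightarrow> complex \<Rightarrow> nat \<Rightarrow> nat \<Rightarrow> complex" where
  "su2_mat \<alpha> \<beta> i j = (if i = 0 then (if j = 0 then \<alpha> else - cnj \<beta>) else (if j = 0 then \<beta> else cnj \<alpha>))"

lemma unitary_mat_su2:
  assumes "(cmod \<alpha>)\<^sup>2 + (cmod \<beta>)\<^sup>2 = 1"
  shows "unitary_mat 2 (su2_mat \<alpha> \<beta>)"
proof -
  have "\<alpha> * cnj \<alpha> + \<beta> * cnj \<beta> = 1"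
    using assms by (simp add: mult_cnj_add_mult_cnj)
  then show ?thesis
    by (auto simp: unitary_mat_def less_2_cases_iff sum_less_2 su2_mat_def algebra_simps)
qed

lemma qsp_mat_Cons_su2:
  "qsp_mat A0 (su2_mat \<alpha> \<beta> # As) z 0 0 = \<alpha> * qsp_mat A0 As z 0 0 - cnj \<beta> * (z * qsp_mat A0 As z 1 0)"
  "qsp_mat A0 (su2_mat \<alpha> \<beta> # As) z 1 0 = \<beta> * qsp_mat A0 As z 0 0 + cnj \<alpha> * (z * qsp_mat A0 As z 1 0)"
  by (simp_all add: mat2_mult_def sum_less_2 phase_mat_def su2_mat_def)

lemma coeff_mult_double:
  assumes "degree p \<le> D" "degree q \<le> D"
  shows "coeff (p * q) (2 * D) = coeff p D * coeff q D"
proof -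
  have "coeff p i * coeff q (2 * D - i) = (if i = D then coeff p D * coeff q D else 0)" for i
    using assms by (cases i D rule: linorder_cases) (auto simp: coeff_eq_0 mult_2)
  then show ?thesis
    by (simp add: coeff_mult)
qed

lemma coeff_orthogonal_if_unit_circle:
  assumes "D > 0" "degree P \<le> D" "degree Q \<le> D"
    and "\<And>z. cmod z = 1 \<Longrightarrow> (cmod (poly P z))\<^sup>2 + (cmod (poly Q z))\<^sup>2 = 1"
  shows "coeff P D * cnj (coeff P 0) + coeff Q D * cnj (coeff Q 0) = 0"
proof -
  have "P * poly_reflect D P + Q * poly_reflect D Q = monom 1 D"
  proof (rule poly_eq_if_eq_on_unit_circle)
    fix z :: complex assume z: "cmod z = 1"
    have "poly (P * poly_reflect D P + Q * poly_reflect D Q) z =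
        z ^ D * (poly P z * cnj (poly P z) + poly Q z * cnj (poly Q z))"
      using poly_reflect_unit_circle[OF assms(2) z] poly_reflect_unit_circle[OF assms(3) z]
      by (simp add: algebra_simps)
    then show "poly (P * poly_reflect D P + Q * poly_reflect D Q) z = poly (monom 1 D) z"
      using assms(4)[OF z] by (simp add: mult_cnj_add_mult_cnj poly_monom)
  qed
  then have "coeff (P * poly_reflect D P + Q * poly_reflect D Q) (2 * D) = 0"
    using assms(1) by (simp add: coeff_monom)
  then show ?thesis
    using assms(2,3) by (simp add: coeff_mult_double degree_poly_reflect coeff_poly_reflect)
qed

lemma exists_scale_to_unit:
  assumes "a \<noteq> 0 \<or> b \<noteq> 0"
  shows "\<exists>c::real. (cmod (of_real c * a))\<^sup>2 + (cmod (of_real c * b))\<^sup>2 = 1"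
proof
  let ?c = "1 / sqrt ((cmod a)\<^sup>2 + (cmod b)\<^sup>2)"
  have "(cmod a)\<^sup>2 + (cmod b)\<^sup>2 > 0"
    using assms by (auto simp: add_pos_nonneg add_nonneg_pos)
  then show "(cmod (of_real ?c * a))\<^sup>2 + (cmod (of_real ?c * b))\<^sup>2 = 1"
    using assms
    by (simp add: norm_mult power_mult_distrib norm_divide power_divide add_divide_distrib [symmetric])
qed

lemma degree_le_if_coeff_Suc_eq_0: "degree p \<le> Suc D \<Longrightarrow> coeff p (Suc D) = 0 \<Longrightarrow> degree p \<le> D"
  using leading_coeff_0_iff[of p] by (cases "degree p = Suc D") auto

lemma exists_unit_pair_orthogonal:
  assumes "v0 * cnj u0 + v1 * cnj u1 = 0"
  shows "\<exists>\<alpha> \<beta>. (cmod \<alpha>)\<^sup>2 + (cmod \<beta>)\<^sup>2 = 1 \<and> cnj \<alpha> * v0 + cnj \<beta> * v1 = 0 \<and> \<alpha> * u1 = \<beta> * u0"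
proof (cases "u0 \<noteq> 0 \<or> u1 \<noteq> 0")
  case True
  then obtain c :: real where "(cmod (of_real c * u0))\<^sup>2 + (cmod (of_real c * u1))\<^sup>2 = 1"
    using exists_scale_to_unit by blast
  moreover have "cnj (of_real c * u0) * v0 + cnj (of_real c * u1) * v1
      = of_real c * (v0 * cnj u0 + v1 * cnj u1)"
    by (simp add: algebra_simps)
  ultimately show ?thesis
    using assms by (intro exI[of _ "of_real c * u0"] exI[of _ "of_real c * u1"]) simp
next
  case u: False
  show ?thesis
  proof (cases "cnj v1 \<noteq> 0 \<or> - cnj v0 \<noteq> 0")
    case True
    then obtain c :: real where "(cmod (of_real c * cnj v1))\<^sup>2 + (cmod (of_real c * - cnj v0))\<^sup>2 = 1"
      using exists_scale_to_unit by blast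
    then show ?thesis
      using u by (intro exI[of _ "of_real c * cnj v1"] exI[of _ "of_real c * - cnj v0"])
        (simp add: algebra_simps)
  next
    case False
    then show ?thesis
      using u by (intro exI[of _ 1] exI[of _ 0]) simp
  qed
qed

lemma norm_unitary_pair:
  assumes "(cmod \<alpha>)\<^sup>2 + (cmod \<beta>)\<^sup>2 = 1"
  shows "(cmod (cnj \<alpha> * a + cnj \<beta> * b))\<^sup>2 + (cmod (\<alpha> * b - \<beta> * a))\<^sup>2 = (cmod a)\<^sup>2 + (cmod b)\<^sup>2"
proof -
  let ?x = "cnj \<alpha> * a + cnj \<beta> * b" and ?y = "\<alpha> * b - \<beta> * a"
  have "?x * cnj ?x + ?y * cnj ?y = (\<alpha> * cnj \<alpha> + \<beta> * cnj \<beta>) * (a * cnj a + b * cnj b)"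
    by (simp add: algebra_simps)
  then have "complex_of_real ((cmod ?x)\<^sup>2 + (cmod ?y)\<^sup>2) = of_real ((cmod a)\<^sup>2 + (cmod b)\<^sup>2)"
    using assms by (simp only: mult_cnj_add_mult_cnj) simp
  then show ?thesis
    by (simp only: of_real_eq_iff)
qed

lemma qsp_layer_peel:
  assumes deg: "degree P \<le> Suc D" "degree Q \<le> Suc D"
    and norm: "\<And>z. cmod z = 1 \<Longrightarrow> (cmod (poly P z))\<^sup>2 + (cmod (poly Q z))\<^sup>2 = 1"
  obtains \<alpha> \<beta> P' Q' where "(cmod \<alpha>)\<^sup>2 + (cmod \<beta>)\<^sup>2 = 1" "degree P' \<le> D" "degree Q' \<le> D"
    "\<And>z. cmod z = 1 \<Longrightarrow> (cmod (poly P' z))\<^sup>2 + (cmod (poly Q' z))\<^sup>2 = 1"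
    "\<And>z. poly P z = \<alpha> * poly P' z - cnj \<beta> * (z * poly Q' z)"
    "\<And>z. poly Q z = \<beta> * poly P' z + cnj \<alpha> * (z * poly Q' z)"
proof -
  obtain \<alpha> \<beta> where unit: "(cmod \<alpha>)\<^sup>2 + (cmod \<beta>)\<^sup>2 = 1"
    and top: "cnj \<alpha> * coeff P (Suc D) + cnj \<beta> * coeff Q (Suc D) = 0"
    and bottom: "\<alpha> * coeff Q 0 = \<beta> * coeff P 0"
    using exists_unit_pair_orthogonal[OF coeff_orthogonal_if_unit_circle[OF _ deg norm]] by auto
  define P' where "P' = smult (cnj \<alpha>) P + smult (cnj \<beta>) Q"
  define R where "R = smult \<alpha> Q - smult \<beta> P"
  have "degree P' \<le> Suc D" "degree R \<le> Suc D"
    unfolding P'_def R_def using deg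
    by (auto intro!: degree_add_le degree_diff_le intro: order_trans[OF degree_smult_le])
  moreover have "coeff P' (Suc D) = 0" "coeff R 0 = 0"
    using top bottom by (simp_all add: P'_def R_def)
  moreover obtain Q' where R: "R = pCons 0 Q'"
    using \<open>coeff R 0 = 0\<close> by (cases R) simp
  ultimately have "degree P' \<le> D" "degree Q' \<le> D"
    by (auto simp: degree_le_if_coeff_Suc_eq_0 degree_pCons_eq_if split: if_splits)
  have \<alpha>\<beta>: "\<alpha> * cnj \<alpha> + \<beta> * cnj \<beta> = 1"
    using unit by (simp add: mult_cnj_add_mult_cnj)
  have RQ': "poly R z = z * poly Q' z" for z
    by (simp add: R)
  show ?thesis
  proof (rule that[OF unit \<open>degree P' \<le> D\<close> \<open>degree Q' \<le> D\<close>])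
    fix z :: complex assume "cmod z = 1"
    then show "(cmod (poly P' z))\<^sup>2 + (cmod (poly Q' z))\<^sup>2 = 1"
      using norm_unitary_pair[OF unit, of "poly P z" "poly Q z"] norm[of z] RQ'[of z]
      by (simp add: P'_def R_def norm_mult)
  next
    fix z
    have "\<alpha> * poly P' z - cnj \<beta> * poly R z = (\<alpha> * cnj \<alpha> + \<beta> * cnj \<beta>) * poly P z"
      and "\<beta> * poly P' z + cnj \<alpha> * poly R z = (\<alpha> * cnj \<alpha> + \<beta> * cnj \<beta>) * poly Q z"
      by (simp_all add: P'_def R_def algebra_simps)
    then show "poly P z = \<alpha> * poly P' z - cnj \<beta> * (z * poly Q' z)"
      and "poly Q z = \<beta> * poly P' z + cnj \<alpha> * (z * poly Q' z)"
      by (simp_all add: \<alpha>\<beta> RQ')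
  qed
qed

lemma qsp_exists:
  assumes "degree P \<le> D" "degree Q \<le> D"
    and "\<And>z. cmod z = 1 \<Longrightarrow> (cmod (poly P z))\<^sup>2 + (cmod (poly Q z))\<^sup>2 = 1"
  shows "\<exists>A0 As. unitary_mat 2 A0 \<and> (\<forall>A\<in>set As. unitary_mat 2 A) \<and> length As = D \<and>
    (\<forall>z. cmod z = 1 \<longrightarrow> qsp_mat A0 As z 0 0 = poly P z \<and> qsp_mat A0 As z 1 0 = poly Q z)"
  using assms
proof (induction D arbitrary: P Q)
  case 0
  then obtain p q where "P = [:p:]" "Q = [:q:]"
    by (auto elim!: degree_eq_zeroE)
  moreover have "(cmod p)\<^sup>2 + (cmod q)\<^sup>2 = 1"
    using "0.prems"(3)[of 1] calculation by simp
  ultimately show ?case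
    by (intro exI[of _ "su2_mat p q"] exI[of _ "[]"]) (simp add: unitary_mat_su2, simp add: su2_mat_def)
next
  case (Suc D)
  obtain \<alpha> \<beta> P' Q' where "(cmod \<alpha>)\<^sup>2 + (cmod \<beta>)\<^sup>2 = 1" "degree P' \<le> D" "degree Q' \<le> D"
      "\<And>z. cmod z = 1 \<Longrightarrow> (cmod (poly P' z))\<^sup>2 + (cmod (poly Q' z))\<^sup>2 = 1"
      and P: "\<And>z. poly P z = \<alpha> * poly P' z - cnj \<beta> * (z * poly Q' z)"
      and Q: "\<And>z. poly Q z = \<beta> * poly P' z + cnj \<alpha> * (z * poly Q' z)"
    using qsp_layer_peel[OF Suc.prems] by blast
  moreover obtain A0 As where "unitary_mat 2 A0" "\<forall>A\<in>set As. unitary_mat 2 A" "length As = D"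
      and IH: "\<And>z. cmod z = 1 \<Longrightarrow> qsp_mat A0 As z 0 0 = poly P' z \<and> qsp_mat A0 As z 1 0 = poly Q' z"
    using Suc.IH calculation by blast
  moreover have "qsp_mat A0 (su2_mat \<alpha> \<beta> # As) z 0 0 = poly P z \<and>
      qsp_mat A0 (su2_mat \<alpha> \<beta> # As) z 1 0 = poly Q z"
    if "cmod z = 1" for z
    using IH[OF that] by (simp only: qsp_mat_Cons_su2 P Q)
  ultimately show ?case
    by (intro exI[of _ A0] exI[of _ "su2_mat \<alpha> \<beta> # As"]) (simp add: unitary_mat_su2)
qed

lemma qsp_exists_laurent:
  "\<exists>A0 As s. unitary_mat 2 A0 \<and> (\<forall>A\<in>set As. unitary_mat 2 A) \<and> length As = 2 * d \<and> s \<noteq> 0 \<and>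
    (\<forall>z. cmod z = 1 \<longrightarrow> qsp_mat A0 As z 0 0 = s * (\<Sum>k\<in>{-int d..int d}. a k * z ^ nat (k + int d)))"
proof -
  define K where "K = {-int d..int d}"
  define S where "S = (\<Sum>k\<in>K. cmod (a k))"
  define s where "s = 1 / (1 + S)"
  have "S \<ge> 0"
    by (simp add: S_def sum_nonneg)
  then have "s > 0" "s * S < 1"
    by (simp_all add: s_def field_simps)
  define P where "P = (\<Sum>k\<in>K. monom (of_real s * a k) (nat (k + int d)))"
  have poly_P: "poly P z = of_real s * (\<Sum>k\<in>K. a k * z ^ nat (k + int d))" for z
    by (simp add: P_def poly_sum poly_monom sum_distrib_left mult_ac)
  have "degree P \<le> 2 * d"
    unfolding P_def K_def by (intro degree_sum_le) (auto intro: order_trans[OF degree_monom_le])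
  moreover have "cmod (poly P z) < 1" if "cmod z = 1" for z
  proof -
    have "cmod (\<Sum>k\<in>K. a k * z ^ nat (k + int d)) \<le> S"
      using norm_sum[of "\<lambda>k. a k * z ^ nat (k + int d)" K] that by (simp add: S_def norm_mult norm_power)
    then have "s * cmod (\<Sum>k\<in>K. a k * z ^ nat (k + int d)) \<le> s * S"
      using \<open>s > 0\<close> by (simp add: mult_left_mono)
    moreover have "cmod (poly P z) = s * cmod (\<Sum>k\<in>K. a k * z ^ nat (k + int d))"
      using \<open>s > 0\<close> by (simp add: poly_P norm_mult)
    ultimately show ?thesis
      using \<open>s * S < 1\<close> by linarith
  qed
  ultimately obtain Q where "degree Q \<le> 2 * d"
      "\<And>z. cmod z = 1 \<Longrightarrow> (cmod (poly P z))\<^sup>2 + (cmod (poly Q z))\<^sup>2 = 1"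
    using complementary_poly by blast
  then obtain A0 As where "unitary_mat 2 A0" "\<forall>A\<in>set As. unitary_mat 2 A" "length As = 2 * d"
      "\<forall>z. cmod z = 1 \<longrightarrow> qsp_mat A0 As z 0 0 = poly P z"
    using qsp_exists[OF \<open>degree P \<le> 2 * d\<close>] by blast
  then show ?thesis
    using \<open>s > 0\<close> by (intro exI[of _ A0] exI[of _ As] exI[of _ "of_real s"]) (simp add: poly_P K_def)
qed

section \<open>The convolution circuit\<close>

(* The signal processing polynomial is z^d times the filter's Laurent polynomial. *)
definition phase_correction :: "nat \<Rightarrow> nat \<Rightarrow> gate list" where
  "phase_correction n d = map (\<lambda>i. Gate1 (phase_mat (unit_root (2 ^ n) (- int d * 2 ^ (n - 1 - i)))) i) [0..<n]"

lemma ancilla_action_phase_correction: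
  "ancilla_action n (phase_correction n d)
    (\<lambda>r a b. if a = b then unit_root (2 ^ n) (- int d * int (rev_bits n r)) else 0)"
proof (rule ancilla_action_cong[OF ancilla_action_diagonal])
  fix v j
  have "run_circuit (phase_correction n d) v j =
      (\<Prod>i<n. if bit_of i j = 1 then unit_root (2 ^ n) (- int d * 2 ^ (n - 1 - i)) else 1) * v j"
    unfolding phase_correction_def by (rule run_circuit_map_upt_diagonal) (rule apply_gate_phase)
  then show "run_circuit (phase_correction n d) v j = unit_root (2 ^ n) (- int d * int (rev_bits n j)) * v j"
    by (simp only: prod_unit_root_rev_bits)
next
  fix r a b :: nat assume "r < 2 ^ n"
  then show "(if a = b then unit_root (2 ^ n) (- int d * int (rev_bits n (r + 2 ^ n * a))) else 0)
      = (if a = b then unit_root (2 ^ n) (- int d * int (rev_bits n r)) else 0)"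
    using rev_bits_mod[of n "r + 2 ^ n * a"] by simp
qed

lemma circuit_valid_phase_correction: "circuit_valid (n + 1) (phase_correction n d)"
  by (auto simp: phase_correction_def circuit_valid_def unitary_mat_phase)

definition conv_circuit ::
  "nat \<Rightarrow> nat \<Rightarrow> (nat \<Rightarrow> nat \<Rightarrow> complex) \<Rightarrow> (nat \<Rightarrow> nat \<Rightarrow> complex) list \<Rightarrow> gate list" where
  "conv_circuit n d A0 As = qft n @ qsp_circuit n A0 As @ phase_correction n d @ iqft n"

lemma run_qft_padded:
  assumes "r < 2 ^ n" "a < 2"
  shows "run_circuit (qft n) (\<lambda>j. if j < 2 ^ n then x j else 0) (r + 2 ^ n * a) =
    of_bool (a = 0) * qft_scale n * (\<Sum>t<2 ^ n. unit_root (2 ^ n) (int (t * rev_bits n r)) * x t)"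
proof -
  have "rev_bits n (r + 2 ^ n * a) = rev_bits n r"
    using rev_bits_mod[of n "r + 2 ^ n * a"] assms by simp
  moreover have "(r + 2 ^ n * a) div 2 ^ n = a"
    using assms by simp
  ultimately show ?thesis
    using assms by (auto simp: run_qft less_2_cases_iff)
qed

lemma unit_root_shifted_laurent:
  "unit_root M (- int d * y) * (\<Sum>k\<in>{-int d..int d}. a k * unit_root M y ^ nat (k + int d))
    = (\<Sum>k\<in>{-int d..int d}. a k * unit_root M (k * y))"
  unfolding sum_distrib_left
proof (intro sum.cong refl)
  fix k assume "k \<in> {-int d..int d}"
  then have "unit_root M (- int d * y) * unit_root M y ^ nat (k + int d) = unit_root M (k * y)"
    by (simp add: unit_root_power unit_root_add [symmetric] algebra_simps)
  then show "unit_root M (- int d * y) * (a k * unit_root M y ^ nat (k + int d)) = a k * unit_root M (k * y)"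
    by (simp add: mult.left_commute)
qed

lemma run_conv_circuit:
  assumes qsp: "\<And>z. cmod z = 1 \<Longrightarrow> qsp_mat A0 As z 0 0 = s * (\<Sum>k\<in>{-int d..int d}. a k * z ^ nat (k + int d))"
    and "m < 2 ^ n"
  shows "run_circuit (conv_circuit n d A0 As) (\<lambda>j. if j < 2 ^ n then x j else 0) m = s * conv (2 ^ n) d a x m"
proof -
  define N :: nat where "N = 2 ^ n"
  define F where "F y = (\<Sum>k\<in>{-int d..int d}. a k * unit_root N (k * int y))" for y
  define X where "X y = (\<Sum>t<N. unit_root N (int t * int y) * x t)" for y
  define y1 where "y1 = run_circuit (qft n) (\<lambda>j. if j < 2 ^ n then x j else 0)"
  define y2 where "y2 = run_circuit (qsp_circuit n A0 As @ phase_correction n d) y1"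
  have y2: "y2 r = s * qft_scale n * F (rev_bits n r) * X (rev_bits n r)" if "r < N" for r
  proof -
    let ?R = "int (rev_bits n r)"
    have "y2 r = unit_root N (- int d * ?R) * qsp_mat A0 As (unit_root N ?R) 0 0 * y1 r"
      using ancilla_actionD[OF ancilla_action_append[OF ancilla_action_qsp_circuit
            ancilla_action_phase_correction],
          where r = r and a = 0 and v = y1] run_qft_padded[of r n 1 x] that
      by (simp add: y1_def y2_def N_def sum_less_2 mat2_mult_def)
    also have "\<dots> = s * F (rev_bits n r) * y1 r"
      using unit_root_shifted_laurent[of N d ?R a] by (simp add: qsp F_def mult_ac)
    also have "y1 r = qft_scale n * X (rev_bits n r)"
      using run_qft_padded[of r n 0 x] that by (simp add: y1_def X_def N_def mult_ac)
    finally show ?thesis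
      by (simp add: mult_ac)
  qed
  have "run_circuit (conv_circuit n d A0 As) (\<lambda>j. if j < 2 ^ n then x j else 0) m = run_circuit (iqft n) y2 m"
    by (simp add: conv_circuit_def run_circuit_append y1_def y2_def)
  also have "\<dots> = qft_scale n * (\<Sum>r<N. unit_root N (- int m * int (rev_bits n r)) * y2 r)"
    using \<open>m < 2 ^ n\<close> by (simp add: run_iqft qft_inverse_map_def N_def)
  also have "\<dots> = qft_scale n * qft_scale n * s *
      (\<Sum>r<N. unit_root N (- int m * int (rev_bits n r)) * F (rev_bits n r) * X (rev_bits n r))"
    by (simp add: y2 sum_distrib_left mult_ac cong: sum.cong_simp)
  also have "\<dots> = qft_scale n * qft_scale n * s * (\<Sum>y<N. unit_root N (- int m * int y) * F y * X y)"
    unfolding N_def by (rule arg_cong[OF sum_rev_bits])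
  also have "\<dots> = qft_scale n * qft_scale n * N * s * conv N d a x m"
    using sum_unit_root_convolution[of N m a "{-int d..int d}" x]
    by (simp add: N_def F_def X_def conv_def)
  finally show ?thesis
    by (simp add: qft_scale_square N_def)
qed

lemma length_conv_circuit:
  "length (conv_circuit n d A0 As) \<le> 2 * n * n + n + 1 + length As * (n + 1)"
  using length_qft[of n] length_iqft[of n]
  by (simp add: conv_circuit_def length_qsp_circuit phase_correction_def)

lemma circuit_valid_conv_circuit:
  "unitary_mat 2 A0 \<Longrightarrow> \<forall>A\<in>set As. unitary_mat 2 A \<Longrightarrow> circuit_valid (n + 1) (conv_circuit n d A0 As)"
  using circuit_valid_qsp_circuit[of A0 As n] circuit_valid_phase_correction[of n d]
  by (simp add: conv_circuit_def circuit_valid_qft circuit_valid_iqft)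

lemma conv_gate_count_bound:
  fixes n d :: nat
  assumes "n \<ge> 1"
  shows "2 * n * n + n + 1 + 2 * d * (n + 1) \<le> 5 * (d * n + n * n)"
proof -
  have "n \<le> n * n" "1 \<le> n * n" "d \<le> d * n"
    using assms by simp_all
  then show ?thesis
    unfolding add_mult_distrib2 mult.assoc by linarith
qed

lemma length_conv_circuit_le_log:
  assumes "n \<ge> 1" "length As = 2 * d"
  shows "real (length (conv_circuit n d A0 As)) \<le> 5 * (real d * log 2 (2 ^ n) + (log 2 (2 ^ n))\<^sup>2)"
proof -
  have "length (conv_circuit n d A0 As) \<le> 5 * (d * n + n * n)"
    using length_conv_circuit[of n d A0 As] conv_gate_count_bound[OF assms(1), of d] assms(2) by simp
  then have "real (length (conv_circuit n d A0 As)) \<le> real (5 * (d * n + n * n))"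
    by (simp only: of_nat_le_iff)
  also have "\<dots> = 5 * (real d * log 2 (2 ^ n) + (log 2 (2 ^ n))\<^sup>2)"
    by (simp add: power2_eq_square)
  finally show ?thesis .
qed

lemma conv_circuit_exists:
  assumes "n \<ge> 1"
  shows "\<exists>C s. circuit_valid (n + 1) C \<and>
    real (length C) \<le> 5 * (real d * log 2 (2 ^ n) + (log 2 (2 ^ n))\<^sup>2) \<and> s \<noteq> 0 \<and>
    (\<forall>x. \<forall>m < 2 ^ n. run_circuit C (\<lambda>j. if j < 2 ^ n then x j else 0) m = s * conv (2 ^ n) d a x m)"
proof -
  obtain A0 As s where "unitary_mat 2 A0" "\<forall>A\<in>set As. unitary_mat 2 A" "length As = 2 * d" "s \<noteq> 0"
    and qsp: "\<forall>z. cmod z = 1 \<longrightarrow> qsp_mat A0 As z 0 0 = s * (\<Sum>k\<in>{-int d..int d}. a k * z ^ nat (k + int d))"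
    using qsp_exists_laurent by blast
  moreover have "run_circuit (conv_circuit n d A0 As) (\<lambda>j. if j < 2 ^ n then x j else 0) m
      = s * conv (2 ^ n) d a x m" if "m < 2 ^ n" for x m
    using run_conv_circuit[OF _ that] qsp by blast
  ultimately show ?thesis
    using length_conv_circuit_le_log[OF assms] circuit_valid_conv_circuit
    by (intro exI[of _ "conv_circuit n d A0 As"] exI[of _ s]) simp
qed

theorem theorem12:
  "\<exists>c::real. \<forall>n::nat. n \<ge> 1 \<longrightarrow> (\<forall>d::nat. \<forall>a::int \<Rightarrow> complex.
     \<exists>C::gate list. \<exists>s::complex.
        circuit_valid (n + 1) C \<and>
        real (length C) \<le> c * (real d * log 2 (2 ^ n) + (log 2 (2 ^ n))\<^sup>2) \<and>
        s \<noteq> 0 \<and>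
        (\<forall>x::nat \<Rightarrow> complex. \<forall>m < 2 ^ n.
           run_circuit C (\<lambda>j. if j < 2 ^ n then x j else 0) m
             = s * conv (2 ^ n) d a x m))"
  by (intro exI[of _ 5] allI impI conv_circuit_exists)

end
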